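(* Let $\alpha>0$, $\sigma>0$, and let $\mathcal S$, $\mathcal T_\alpha$, $\mathcal F_\alpha$, $E_h$ be the linear operators on the polynomial space $\mathbb C[z]$ described in the context. Then, as linear operators on $\mathbb C[z]$, $$\mathcal S=E_{\sigma/\alpha}\,\mathcal T_\alpha,\qquad \mathcal S^{-1}=\mathcal F_\alpha\,E_{-\sigma/\alpha}.$$
   Context: Let $\pi_{\alpha,\sigma}=\exp(-\sigma/\alpha^2)\sum_{n\ge0}\frac{1}{n!}(\sigma/\alpha^2)^n\delta_{\alpha n}$ on $\alpha\mathbb N_0$, and let $(c_n)_{n\ge0}$ be the monic polynomials orthogonal with respect to $\pi_{\alpha,\sigma}$, with generating function $\sum_{n\ge0}\frac{t^n}{n!}c_n(z)=\exp\big(\frac z\alpha\log(1+t\alpha)-\frac{\sigma t}{\alpha}\big)$. Let $\mathcal S$ denote the linear bijection of $\mathbb C[z]$ defined by $\mathcal Sc_n(z)=z^n$ for $n\in\mathbb N_0$ (this is the restriction to polynomials of the generalized Segal--Bargmann transform, the unitary $L^2(\alpha\mathbb N_0,\pi_{\alpha,\sigma})\to\mathbb F_\sigma(\mathbb C)$ with $c_n\mapsto z^n$). For $h\in\mathbb C$, $E_h$ is the shift $(E_hp)(z)=p(z+h)$. Let $S(n,k)$ and $s(n,k)$ be the Stirling numbers of the second and first kind, so $z^n=\sum_{k=1}^nS(n,k)(z)_k$ and $(z)_n=\sum_{k=1}^ns(n,k)z^k$ with $(z)_n=z(z-1)\cdots(z-n+1)$. Define $T_{\alpha,0}=1$, $T_{\alpha,n}(z)=\sum_{k=1}^nS(n,k)\alpha^{n-k}z^k$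 ($n\ge1$), and let $\mathcal T_\alpha$ be the linear operator on $\mathbb C[z]$ with $\mathcal T_\alpha z^n=T_{\alpha,n}(z)$. Define $(z\mid\alpha)_0=1$, $(z\mid\alpha)_n=z(z-\alpha)\cdots(z-(n-1)\alpha)$, and let $\mathcal F_\alpha$ be the linear operator on $\mathbb C[z]$ with $\mathcal F_\alpha z^n=(z\mid\alpha)_n$. *)

theory Defs
  imports "HOL-Analysis.Analysis" "HOL-Computational_Algebra.Polynomial" "HOL-Combinatorics.Stirling"
begin

definition shiftE :: "complex \<Rightarrow> complex poly \<Rightarrow> complex poly" where
  "shiftE h p = pcompose p [:h, 1:]"

definition Tpoly :: "real \<Rightarrow> nat \<Rightarrow> complex poly" where
  "Tpoly \<alpha> n = (if n = 0 then 1 else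
     (\<Sum>k=1..n. monom (of_nat (Stirling n k) * complex_of_real \<alpha> ^ (n - k)) k))"

definition Top :: "real \<Rightarrow> complex poly \<Rightarrow> complex poly" where
  "Top \<alpha> p = (\<Sum>i\<le>degree p. smult (coeff p i) (Tpoly \<alpha> i))"

definition falling_step :: "real \<Rightarrow> nat \<Rightarrow> complex poly" where
  "falling_step \<alpha> n = (\<Prod>i<n. [:- (of_nat i * complex_of_real \<alpha>), 1:])"

definition Fop :: "real \<Rightarrow> complex poly \<Rightarrow> complex poly" where
  "Fop \<alpha> p = (\<Sum>i\<le>degree p. smult (coeff p i) (falling_step \<alpha> i))"

text \<open>Weights of the Poisson--Charlier measure pi_{alpha,sigma} at the point alpha*m.\<close>
definition pc_weight :: "real \<Rightarrow> real \<Rightarrow> nat \<Rightarrow> real" where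
  "pc_weight \<alpha> \<sigma> m = exp (- \<sigma> / \<alpha>\<^sup>2) * (\<sigma> / \<alpha>\<^sup>2) ^ m / fact m"

end

theory Submission
  imports Defs "HOL-Analysis.FPS_Convergence" "HOL-Analysis.Generalised_Binomial_Theorem"
begin

text \<open>
  Both identities are between linear operators, so they can be checked on monomials.
  The binomial series gives \<open>\<Sum>\<^sub>n t\<^sup>n/n! (z|\<alpha>)\<^sub>n = (1 + t\<alpha>)\<^bsup>z/\<alpha>\<^esup>\<close>; multiplying by
  \<open>exp(-\<sigma>t/\<alpha>)\<close> makes the coefficients \<open>F\<^sub>\<alpha> (E\<^bsub>-\<sigma>/\<alpha>\<^esub> z\<^sup>n)\<close>, so comparing with the generating
  function of the \<open>c\<^sub>n\<close> gives \<open>c\<^sub>n = F\<^sub>\<alpha> (E\<^bsub>-\<sigma>/\<alpha>\<^esub> z\<^sup>n)\<close>, i.e. \<open>F\<^sub>\<alpha> E\<^bsub>-\<sigma>/\<alpha>\<^esub> = S\<^sup>-\<^sup>1\<close>.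
  The Stirling expansion \<open>z\<^sup>n = \<Sum>\<^sub>k S(n,k) \<alpha>\<^bsup>n-k\<^esup> (z|\<alpha>)\<^sub>k\<close> says \<open>F\<^sub>\<alpha> T\<^sub>\<alpha> = id\<close>, so
  \<open>E\<^bsub>\<sigma>/\<alpha>\<^esub> T\<^sub>\<alpha>\<close> is a right inverse of \<open>S\<^sup>-\<^sup>1\<close> and hence equals \<open>S\<close>.
\<close>

definition poly_linear :: "('a::comm_semiring_0 poly \<Rightarrow> 'a poly) \<Rightarrow> bool" where
  "poly_linear L \<longleftrightarrow> (\<forall>p q. L (p + q) = L p + L q) \<and> (\<forall>a p. L (smult a p) = smult a (L p))"

definition poly_linext :: "(nat \<Rightarrow> 'a::comm_semiring_0 poly) \<Rightarrow> 'a poly \<Rightarrow> 'a poly" where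
  "poly_linext g p = (\<Sum>i\<le>degree p. smult (coeff p i) (g i))"

lemma poly_linext_conv_sum:
  assumes "degree p \<le> n"
  shows "poly_linext g p = (\<Sum>i\<le>n. smult (coeff p i) (g i))"
  unfolding poly_linext_def using assms
  by (intro sum.mono_neutral_left) (auto simp: coeff_eq_0)

lemma poly_linear_sum:
  assumes "poly_linear L"
  shows "L (\<Sum>i\<in>A. f i) = (\<Sum>i\<in>A. L (f i))"
proof -
  have "L 0 = 0"
    using assms unfolding poly_linear_def by (metis smult_0_left)
  with assms show ?thesis
    by (induction A rule: infinite_finite_induct) (auto simp: poly_linear_def)
qed

lemma poly_linear_smult: "poly_linear (smult a)"
  by (simp add: poly_linear_def smult_add_right mult.commute)

lemma poly_linear_comp:
  "poly_linear L \<Longrightarrow> poly_linear M \<Longrightarrow> poly_linear (\<lambda>p. L (M p))"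
  by (simp add: poly_linear_def)

lemma poly_linear_poly_linext: "poly_linear (poly_linext g)"
proof -
  have "poly_linext g (p + q) = poly_linext g p + poly_linext g q" for p q
  proof -
    let ?n = "max (degree p) (degree q)"
    have "degree (p + q) \<le> ?n"
      by (rule degree_add_le) auto
    then show ?thesis
      by (simp add: poly_linext_conv_sum[of _ ?n] sum.distrib smult_add_left)
  qed
  moreover have "poly_linext g (smult a p) = smult a (poly_linext g p)" for a p
  proof -
    have "poly_linext g (smult a p) = (\<Sum>i\<le>degree p. smult (coeff (smult a p) i) (g i))"
      by (rule poly_linext_conv_sum[OF degree_smult_le])
    then show ?thesis
      by (simp add: poly_linext_def poly_linear_sum[OF poly_linear_smult])
  qed
  ultimately show ?thesis
    by (simp add: poly_linear_def)
qed

lemma poly_linext_monom: "poly_linext g (monom a k) = smult a (g k)"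
proof -
  have "poly_linext g (monom a k) = (\<Sum>i\<le>k. smult (coeff (monom a k) i) (g i))"
    by (rule poly_linext_conv_sum) (simp add: degree_monom_le)
  also have "\<dots> = (\<Sum>i\<le>k. if i = k then smult a (g k) else 0)"
    by (rule sum.cong) (auto simp: coeff_monom)
  finally show ?thesis
    by simp
qed

lemma poly_linext_monom_1 [simp]:
  fixes p :: "'a::comm_semiring_1 poly"
  shows "poly_linext (monom 1) p = p"
  by (simp add: poly_linext_def smult_monom poly_as_sum_of_monoms)

lemma poly_linear_poly_linext_comp:
  "poly_linear L \<Longrightarrow> L (poly_linext g p) = poly_linext (\<lambda>i. L (g i)) p"
  unfolding poly_linext_def by (simp add: poly_linear_sum) (simp add: poly_linear_def)

corollary poly_linear_eq_poly_linext:
  fixes L :: "'a::comm_semiring_1 poly \<Rightarrow> 'a poly"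
  shows "poly_linear L \<Longrightarrow> L p = poly_linext (\<lambda>i. L (monom 1 i)) p"
  using poly_linear_poly_linext_comp[of L "monom 1" p] by simp

lemma Fop_eq_poly_linext: "Fop \<alpha> = poly_linext (falling_step \<alpha>)"
  by (simp add: fun_eq_iff Fop_def poly_linext_def)

lemma poly_linear_Fop: "poly_linear (Fop \<alpha>)"
  by (simp add: Fop_eq_poly_linext poly_linear_poly_linext)

lemma Fop_monom: "Fop \<alpha> (monom a k) = smult a (falling_step \<alpha> k)"
  by (simp add: Fop_eq_poly_linext poly_linext_monom)

lemma Top_eq_poly_linext: "Top \<alpha> = poly_linext (Tpoly \<alpha>)"
  by (simp add: fun_eq_iff Top_def poly_linext_def)

lemma poly_linear_shiftE: "poly_linear (shiftE h)"
  by (simp add: poly_linear_def shiftE_def pcompose_add pcompose_smult)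

lemma shiftE_shiftE: "shiftE a (shiftE b p) = shiftE (a + b) p"
  by (simp add: shiftE_def pcompose_assoc[symmetric] pcompose_pCons add.commute)

lemma shiftE_0 [simp]: "shiftE 0 p = p"
  by (simp add: shiftE_def pcompose_idR)

lemma shiftE_monom_1:
  "shiftE h (monom 1 n) = (\<Sum>k\<le>n. monom (of_nat (n choose k) * h ^ (n - k)) k)"
  by (rule poly_ext)
    (simp add: shiftE_def poly_pcompose poly_monom poly_sum binomial_ring ac_simps)

definition falling_fact_step :: "'a::comm_ring_1 \<Rightarrow> nat \<Rightarrow> 'a \<Rightarrow> 'a" where
  "falling_fact_step a k z = (\<Prod>i<k. z - of_nat i * a)"

lemma falling_fact_step_Suc:
  "falling_fact_step a (Suc k) z = falling_fact_step a k z * (z - of_nat k * a)"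
  by (simp add: falling_fact_step_def)

lemma poly_falling_step: "poly (falling_step \<alpha> k) z = falling_fact_step (of_real \<alpha>) k z"
  by (simp add: falling_step_def falling_fact_step_def poly_prod)

lemma sum_Stirling_falling_fact_step:
  "(\<Sum>k\<le>n. of_nat (Stirling n k) * a ^ (n - k) * falling_fact_step a k z) = z ^ n"
proof (induction n)
  case 0
  show ?case
    by (simp add: falling_fact_step_def)
next
  case (Suc n)
  define f where "f k = falling_fact_step a k z" for k
  define s where "s k = (of_nat (Stirling n k) :: 'a)" for k
  have "s k * a ^ (n - k) * (z * f k) =
      s k * a ^ (n - k) * f (Suc k) + of_nat k * s k * a ^ (Suc n - k) * f k" if "k \<le> n" for k
    using that by (simp add: f_def falling_fact_step_Suc Suc_diff_le algebra_simps)
  then have "z ^ Suc n = (\<Sum>k\<le>n. s k * a ^ (n - k) * f (Suc k))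
      + (\<Sum>k\<le>Suc n. of_nat k * s k * a ^ (Suc n - k) * f k)"
    using Suc.IH[symmetric] by (simp add: s_def f_def sum_distrib_left sum.distrib ac_simps)
  also have "(\<Sum>k\<le>Suc n. of_nat k * s k * a ^ (Suc n - k) * f k)
      = (\<Sum>k\<le>n. of_nat (Suc k) * s (Suc k) * a ^ (n - k) * f (Suc k))"
    by (subst sum.atMost_Suc_shift) simp
  also have "(\<Sum>k\<le>n. s k * a ^ (n - k) * f (Suc k)) + \<dots>
      = (\<Sum>k\<le>n. of_nat (Stirling (Suc n) (Suc k)) * a ^ (n - k) * f (Suc k))"
    unfolding sum.distrib[symmetric] by (intro sum.cong) (simp_all add: s_def algebra_simps)
  also have "\<dots> = (\<Sum>k\<le>Suc n. of_nat (Stirling (Suc n) k) * a ^ (Suc n - k) * f k)"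
    by (subst sum.atMost_Suc_shift) simp
  finally show ?case
    by (simp add: f_def)
qed

lemma Tpoly_conv_sum:
  "Tpoly \<alpha> n = (\<Sum>k\<le>n. monom (of_nat (Stirling n k) * of_real \<alpha> ^ (n - k)) k)"
proof (cases n)
  case (Suc m)
  have "{..n} = insert 0 {1..n}"
    by auto
  with Suc show ?thesis
    by (simp add: Tpoly_def)
qed (simp add: Tpoly_def)

lemma Fop_Tpoly: "Fop \<alpha> (Tpoly \<alpha> n) = monom 1 n"
proof (rule poly_ext)
  fix z
  have "Fop \<alpha> (Tpoly \<alpha> n)
      = (\<Sum>k\<le>n. smult (of_nat (Stirling n k) * of_real \<alpha> ^ (n - k)) (falling_step \<alpha> k))"
    by (simp add: Tpoly_conv_sum poly_linear_sum[OF poly_linear_Fop] Fop_monom)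
  then show "poly (Fop \<alpha> (Tpoly \<alpha> n)) z = poly (monom 1 n) z"
    by (simp add: poly_sum poly_falling_step poly_monom sum_Stirling_falling_fact_step)
qed

lemma Fop_Top: "Fop \<alpha> (Top \<alpha> p) = p"
  by (simp add: Top_eq_poly_linext poly_linear_poly_linext_comp[OF poly_linear_Fop] Fop_Tpoly)

lemma gbinomial_mult_power_eq_falling_fact_step:
  fixes a z t :: "'a::field_char_0"
  assumes "a \<noteq> 0"
  shows "((z / a) gchoose n) * (t * a) ^ n = t ^ n / fact n * falling_fact_step a n z"
proof -
  have "(\<Prod>i<n. z / a - of_nat i) * a ^ n = (\<Prod>i<n. (z / a - of_nat i) * a)"
    by (simp add: prod.distrib)
  also have "\<dots> = falling_fact_step a n z"
    unfolding falling_fact_step_def by (rule prod.cong) (use assms in \<open>auto simp: field_simps\<close>)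
  finally show ?thesis
    by (simp add: gbinomial_prod_rev atLeast0LessThan power_mult_distrib field_simps)
qed

lemma falling_fact_step_egf:
  fixes a z t :: complex
  assumes "a \<noteq> 0" "norm (t * a) < 1"
  shows "(\<lambda>n. t ^ n / fact n * falling_fact_step a n z) sums exp (z / a * Ln (1 + t * a))"
    and "summable (\<lambda>n. norm (t ^ n / fact n * falling_fact_step a n z))"
proof -
  have term_eq: "t ^ n / fact n * falling_fact_step a n z = ((z / a) gchoose n) * (t * a) ^ n" for n
    by (simp add: gbinomial_mult_power_eq_falling_fact_step[OF assms(1)])
  have "1 + t * a \<noteq> 0"
    using assms(2) by (metis add_eq_0_iff norm_minus_cancel norm_one less_irrefl)
  then show "(\<lambda>n. t ^ n / fact n * falling_fact_step a n z) sums exp (z / a * Ln (1 + t * a))"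
    unfolding term_eq using gen_binomial_complex[OF assms(2), of "z / a"] by (simp add: powr_def)
  define \<rho> where "\<rho> = (1 + norm (t * a)) / 2"
  have "norm (t * a) < \<rho>" "\<bar>\<rho>\<bar> < 1"
    using assms(2) by (auto simp: \<rho>_def)
  then have "summable (\<lambda>n. ((z / a) gchoose n) * of_real \<rho> ^ n)"
    using gen_binomial_complex[of "of_real \<rho>" "z / a"] by (auto dest: sums_summable)
  then show "summable (\<lambda>n. norm (t ^ n / fact n * falling_fact_step a n z))"
    unfolding term_eq by (rule powser_insidea) (use \<open>norm (t * a) < \<rho>\<close> in auto)
qed

lemma egf_binomial_convolution_exp:
  fixes x :: "nat \<Rightarrow> 'a::{real_normed_field,banach}"
  assumes "summable (\<lambda>n. norm (t ^ n / fact n * x n))"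
    and "(\<lambda>n. t ^ n / fact n * x n) sums X"
  shows "(\<lambda>n. t ^ n / fact n * (\<Sum>i\<le>n. of_nat (n choose i) * b ^ (n - i) * x i)) sums (X * exp (b * t))"
proof -
  define A where "A = (\<lambda>n. t ^ n / fact n * x n)"
  define E where "E = (\<lambda>n. (b * t) ^ n /\<^sub>R fact n)"
  have "A i * E (n - i) = t ^ n / fact n * (of_nat (n choose i) * b ^ (n - i) * x i)" if "i \<le> n" for n i
  proof -
    have "t ^ n = t ^ i * t ^ (n - i)"
      using that by (simp flip: power_add)
    then show ?thesis
      unfolding A_def E_def binomial_fact[OF that]
      by (simp add: scaleR_conv_of_real power_mult_distrib field_simps)
  qed
  then have "(\<lambda>n. \<Sum>i\<le>n. A i * E (n - i)) = (\<lambda>n. t ^ n / fact n * (\<Sum>i\<le>n. of_nat (n choose i) * b ^ (n - i) * x i))"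
    by (simp add: sum_distrib_left)
  moreover have "(\<lambda>n. \<Sum>i\<le>n. A i * E (n - i)) sums (suminf A * suminf E)"
    using assms(1) summable_norm_exp[of "b * t"] unfolding A_def E_def by (rule Cauchy_product_sums)
  moreover have "suminf A * suminf E = X * exp (b * t)"
    using assms(2) exp_converges[of "b * t"] by (simp add: A_def E_def sums_iff)
  ultimately show ?thesis
    by simp
qed

lemma Fop_shiftE_monom_egf:
  fixes z t b :: complex
  assumes "\<alpha> > 0" "norm t < 1 / \<alpha>"
  shows "(\<lambda>n. t ^ n / fact n * poly (Fop \<alpha> (shiftE b (monom 1 n))) z)
           sums exp (z / of_real \<alpha> * Ln (1 + t * of_real \<alpha>) + b * t)"
proof -
  have \<alpha>: "complex_of_real \<alpha> \<noteq> 0" "norm (t * of_real \<alpha>) < 1"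
    using assms by (auto simp: norm_mult field_simps)
  have "poly (Fop \<alpha> (shiftE b (monom 1 n))) z
      = (\<Sum>i\<le>n. of_nat (n choose i) * b ^ (n - i) * falling_fact_step (of_real \<alpha>) i z)" for n
    by (simp add: shiftE_monom_1 poly_linear_sum[OF poly_linear_Fop] Fop_monom poly_sum
        poly_falling_step)
  then show ?thesis
    using egf_binomial_convolution_exp[OF falling_fact_step_egf(2,1)[OF \<alpha>]]
    by (simp add: exp_add)
qed

lemma egf_coeffs_unique:
  fixes x y :: "nat \<Rightarrow> complex"
  assumes "r > 0"
    and "\<And>t. norm t < r \<Longrightarrow> (\<lambda>n. t ^ n / fact n * x n) sums f t"
    and "\<And>t. norm t < r \<Longrightarrow> (\<lambda>n. t ^ n / fact n * y n) sums f t"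
  shows "x = y"
proof -
  have radius: "fps_conv_radius (Abs_fps (\<lambda>n. w n / fact n)) > 0"
    if w: "\<And>t. norm t < r \<Longrightarrow> (\<lambda>n. t ^ n / fact n * w n) sums f t" for w
  proof -
    have "summable (\<lambda>n. w n / fact n * of_real (r / 2) ^ n)"
      using sums_summable[OF w[of "of_real (r / 2)"]] assms(1) by (simp add: field_simps)
    then have "norm (complex_of_real (r / 2)) \<le> conv_radius (\<lambda>n. w n / fact n)"
      by (rule conv_radius_geI)
    then have "ereal (r / 2) \<le> fps_conv_radius (Abs_fps (\<lambda>n. w n / fact n))"
      using assms(1) by (simp add: fps_conv_radius_def)
    then show ?thesis
      using assms(1) by (metis ereal_less(2) half_gt_zero order_less_le_trans)
  qed
  have eval: "eval_fps (Abs_fps (\<lambda>n. w n / fact n)) t = f t"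
    if "norm t < r" and w: "\<And>t. norm t < r \<Longrightarrow> (\<lambda>n. t ^ n / fact n * w n) sums f t" for w t
    using w[OF that(1)] by (simp add: eval_fps_def sums_iff field_simps)
  have "eventually (\<lambda>t. norm t < r) (nhds (0::complex))"
    using eventually_nhds_ball[OF assms(1), of "0::complex"] by (simp add: dist_norm)
  then have "eventually (\<lambda>t. eval_fps (Abs_fps (\<lambda>n. x n / fact n)) t
      = eval_fps (Abs_fps (\<lambda>n. y n / fact n)) t) (nhds 0)"
    by eventually_elim (simp add: eval[OF _ assms(2)] eval[OF _ assms(3)])
  then have "Abs_fps (\<lambda>n. x n / fact n) = Abs_fps (\<lambda>n. y n / fact n)"
    using radius[OF assms(2)] radius[OF assms(3)] by (intro eval_fps_eqD)
  then show ?thesis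
    by (simp add: fun_eq_iff fps_eq_iff)
qed

lemma charlier_eq_Fop_shiftE_monom:
  fixes \<alpha> \<sigma> :: real and c :: "nat \<Rightarrow> complex poly"
  assumes "\<alpha> > 0"
    and c_gen: "\<And>z t. norm t < 1 / \<alpha> \<Longrightarrow>
       (\<lambda>n. t ^ n / fact n * poly (c n) z) sums
         exp (z / of_real \<alpha> * Ln (1 + t * of_real \<alpha>) - of_real \<sigma> * t / of_real \<alpha>)"
  shows "c n = Fop \<alpha> (shiftE (of_real (- \<sigma> / \<alpha>)) (monom 1 n))"
proof (rule poly_ext)
  fix z
  have "(\<lambda>n. poly (c n) z) = (\<lambda>n. poly (Fop \<alpha> (shiftE (of_real (- \<sigma> / \<alpha>)) (monom 1 n))) z)"
  proof (rule egf_coeffs_unique)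
    fix t :: complex
    assume t: "norm t < 1 / \<alpha>"
    show "(\<lambda>n. t ^ n / fact n * poly (c n) z) sums
        exp (z / of_real \<alpha> * Ln (1 + t * of_real \<alpha>) - of_real \<sigma> * t / of_real \<alpha>)"
      using c_gen[OF t] .
    show "(\<lambda>n. t ^ n / fact n * poly (Fop \<alpha> (shiftE (of_real (- \<sigma> / \<alpha>)) (monom 1 n))) z) sums
        exp (z / of_real \<alpha> * Ln (1 + t * of_real \<alpha>) - of_real \<sigma> * t / of_real \<alpha>)"
      using Fop_shiftE_monom_egf[OF assms(1) t, where z = z and b = "of_real (- \<sigma> / \<alpha>)"] by simp
  qed (use assms(1) in simp)
  then show "poly (c n) z = poly (Fop \<alpha> (shiftE (of_real (- \<sigma> / \<alpha>)) (monom 1 n))) z"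
    by (simp add: fun_eq_iff)
qed

theorem proposition4p4:
  fixes \<alpha> \<sigma> :: real
    and c :: "nat \<Rightarrow> complex poly"
    and S :: "complex poly \<Rightarrow> complex poly"
  assumes "\<alpha> > 0" and "\<sigma> > 0"
    and c_monic: "\<And>n. degree (c n) = n \<and> lead_coeff (c n) = 1"
    and c_orth: "\<And>j k. j \<noteq> k \<Longrightarrow>
       (\<lambda>m. complex_of_real (pc_weight \<alpha> \<sigma> m) * poly (c j) (of_real (\<alpha> * real m))
              * cnj (poly (c k) (of_real (\<alpha> * real m)))) sums 0"
    and c_gen: "\<And>z t. norm t < 1 / \<alpha> \<Longrightarrow>
       (\<lambda>n. t ^ n / fact n * poly (c n) z) sums
         exp (z / of_real \<alpha> * Ln (1 + t * of_real \<alpha>) - of_real \<sigma> * t / of_real \<alpha>)"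
    and S_add: "\<And>p q. S (p + q) = S p + S q"
    and S_smult: "\<And>a p. S (smult a p) = smult a (S p)"
    and S_c: "\<And>n. S (c n) = monom 1 n"
  shows "(\<forall>p. S p = shiftE (of_real (\<sigma> / \<alpha>)) (Top \<alpha> p))
       \<and> (\<forall>p. S (Fop \<alpha> (shiftE (of_real (- \<sigma> / \<alpha>)) p)) = p
             \<and> Fop \<alpha> (shiftE (of_real (- \<sigma> / \<alpha>)) (S p)) = p)"
proof -
  define G where "G p = Fop \<alpha> (shiftE (of_real (- \<sigma> / \<alpha>)) p)" for p
  define H where "H p = shiftE (of_real (\<sigma> / \<alpha>)) (Top \<alpha> p)" for p
  have S_linear: "poly_linear S"
    using S_add S_smult by (simp add: poly_linear_def)
  have "G p = poly_linext c p" for p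
  proof -
    have "G p = poly_linext (\<lambda>i. G (monom 1 i)) p"
      unfolding G_def
      by (rule poly_linear_eq_poly_linext[OF poly_linear_comp[OF poly_linear_Fop poly_linear_shiftE]])
    also have "(\<lambda>i. G (monom 1 i)) = c"
      by (simp add: fun_eq_iff G_def charlier_eq_Fop_shiftE_monom[OF assms(1) c_gen])
    finally show ?thesis .
  qed
  then have SG: "S (G p) = p" for p
    by (simp add: poly_linear_poly_linext_comp[OF S_linear] S_c)
  have GH: "G (H p) = p" for p
    by (simp add: G_def H_def shiftE_shiftE Fop_Top)
  have "S p = H p" for p
    using SG[of "H p"] GH[of p] by simp
  with SG GH show ?thesis
    by (simp add: G_def H_def)
qed

end
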